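(* Let $k \geq 2$ and let $a_1,\ldots,a_k$ be integers, all nonzero and all of the same sign. Let $\mathit{min}_1,\ldots,\mathit{min}_k \in \mathbb{Z}$. Fix an integer $i$ with $1 \leq i < k$, and let $\mathit{max}_i \in \mathbb{Z}$ with $n_i := \mathit{max}_i - \mathit{min}_i > 0$. Let $X \subseteq \mathbb{Z}^k$ be a set such that every $(x_1,\ldots,x_k) \in X$ satisfies $\mathit{min}_j \leq x_j$ for all $1 \leq j \leq k$ and $x_i < \mathit{max}_i$. Suppose that for all $(x_1,\ldots,x_k) \in X$, $$\forall i' \in \mathbb{Z},\ 1 \leq i' < i \Rightarrow \sum_{j=1}^{i'} |a_j|\,(x_j - \mathit{min}_j) < |a_{i'+1}|,$$ and suppose that either $n_i \cdot a_i = a_{i+1}$ or $|a_i| \cdot n_i \leq |a_{i+1}|$. Then for all $(x_1,\ldots,x_k) \in X$, $$\sum_{j=1}^{i} |a_j|\,(x_j - \mathit{min}_j) < |a_{i+1}|.$$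
   Context: All quantities are integers; $|\cdot|$ denotes absolute value. *)

theory Defs
  imports Main
begin

end

theory Submission
  imports Defs
begin

text \<open>Read the weighted sum as a mixed-radix number with digits \<open>x j - mn j\<close>. The prefix up
  to \<open>i - 1\<close> is below \<open>\<bar>a i\<bar>\<close> (trivially so for \<open>i = 1\<close>), and the \<open>i\<close>-th digit is at most
  \<open>n\<^sub>i - 1\<close>, so the prefix up to \<open>i\<close> is below \<open>\<bar>a i\<bar> * n\<^sub>i\<close>, which is at most \<open>\<bar>a (i+1)\<bar>\<close>.\<close>

lemma add_mult_digit_less:
  fixes s c d n b :: int
  assumes "s < c" "0 \<le> c" "d < n" "c * n \<le> b"
  shows "s + c * d < b"
proof -
  have "c * d \<le> c * (n - 1)"
    using assms(2,3) by (intro mult_left_mono) auto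
  then show ?thesis
    using assms(1,4) by (simp add: algebra_simps)
qed

lemma abs_mult_le_abs_if_mult_eq:
  fixes n a b :: int
  assumes "0 < n" "n * a = b \<or> \<bar>a\<bar> * n \<le> \<bar>b\<bar>"
  shows "\<bar>a\<bar> * n \<le> \<bar>b\<bar>"
  using assms by (auto simp: abs_mult)

lemma sum_prefix_less_next:
  fixes f c :: "nat \<Rightarrow> int"
  assumes "1 \<le> i" "0 < c i"
    and "\<forall>i'. 1 \<le> i' \<and> i' < i \<longrightarrow> (\<Sum>j=1..i'. f j) < c (i' + 1)"
  shows "(\<Sum>j=1..i-1. f j) < c i"
proof (cases "i = 1")
  case True
  then show ?thesis using assms(2) by simp
next
  case False
  then show ?thesis using assms(1) assms(3)[rule_format, of "i - 1"] by simp
qed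

theorem lemma1:
  fixes k i :: nat
    and a mn :: "nat \<Rightarrow> int"
    and mx_i :: int
    and X :: "(nat \<Rightarrow> int) set"
  assumes "k \<ge> 2"
    and "\<forall>j\<in>{1..k}. a j \<noteq> 0"
    and "(\<forall>j\<in>{1..k}. a j > 0) \<or> (\<forall>j\<in>{1..k}. a j < 0)"
    and "1 \<le> i" and "i < k"
    and "mx_i - mn i > 0"
    and "\<forall>x\<in>X. (\<forall>j\<in>{1..k}. mn j \<le> x j) \<and> x i < mx_i"
    and "\<forall>x\<in>X. \<forall>i'::nat. 1 \<le> i' \<and> i' < i \<longrightarrow>
           (\<Sum>j=1..i'. \<bar>a j\<bar> * (x j - mn j)) < \<bar>a (i'+1)\<bar>"
    and "(mx_i - mn i) * a i = a (i+1) \<or> \<bar>a i\<bar> * (mx_i - mn i) \<le> \<bar>a (i+1)\<bar>"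
  shows "\<forall>x\<in>X. (\<Sum>j=1..i. \<bar>a j\<bar> * (x j - mn j)) < \<bar>a (i+1)\<bar>"
proof
  fix x assume "x \<in> X"
  have "0 < \<bar>a i\<bar>" using assms(2,4,5) by auto
  then have prefix: "(\<Sum>j=1..i-1. \<bar>a j\<bar> * (x j - mn j)) < \<bar>a i\<bar>"
    using assms(8) \<open>x \<in> X\<close>
    by (intro sum_prefix_less_next[OF assms(4)]) auto
  have digit: "x i - mn i < mx_i - mn i" using assms(7) \<open>x \<in> X\<close> by auto
  have radix: "\<bar>a i\<bar> * (mx_i - mn i) \<le> \<bar>a (i+1)\<bar>"
    using abs_mult_le_abs_if_mult_eq[OF assms(6,9)] .
  have "(\<Sum>j=1..i. \<bar>a j\<bar> * (x j - mn j))
      = (\<Sum>j=1..i-1. \<bar>a j\<bar> * (x j - mn j)) + \<bar>a i\<bar> * (x i - mn i)"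
    using assms(4) by (cases i) auto
  also have "\<dots> < \<bar>a (i+1)\<bar>"
    using add_mult_digit_less[OF prefix _ digit radix] by simp
  finally show "(\<Sum>j=1..i. \<bar>a j\<bar> * (x j - mn j)) < \<bar>a (i+1)\<bar>" .
qed

end
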